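(* Let $\alpha,\beta$ be positive integers and let $h$ be a real-valued function differentiable on an open neighbourhood of $\mathcal{U}_2$ in $\mathbb{C}^{2\times2}$, with $h(\Psi D)=h(\Psi)$ for all $\Psi\in\mathcal{U}_2$ and diagonal unitary $D$, such that $h(\Psi(\theta,\phi))=z_{\alpha,\beta}(\theta,\phi)^TMz_{\alpha,\beta}(\theta,\phi)+C$ for all $\theta,\phi\in\mathbb{R}$, for some real symmetric $M\in\mathbb{R}^{3\times3}$ and $C\in\mathbb{R}$. Let $\lambda_1\ge\lambda_2\ge\lambda_3$ be the eigenvalues of $M$ with orthonormal eigenvectors $w,u,v$, where $w_1\ge0$, and assume $u_1=0$ or $v_1=0$. Let $\theta_*\in[0,\pi/(2\alpha)]$ and $\phi_*\in\mathbb{R}$ satisfy $z_{\alpha,\beta}(\theta_*,\phi_* )=w$, and $\Psi_*=\Psi(\theta_*,\phi_* )$. Then $$h(\Psi_* )-h(I_2)\ge\frac{\sqrt2}{8\alpha}\,\|\operatorname{grad}h(I_2)\|\,\|\Psi_*-I_2\|.$$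
   Context: $\mathcal{U}_2$ is the group of $2\times2$ unitary matrices; $\|\cdot\|$ the Frobenius norm; $\mathbb{C}^{2\times2}$ carries the real inner product $\mathrm{Re}\,\mathrm{tr}(X^HY)$; $\nabla h=\partial h/\partial X^{\Re}+\mathrm{i}\,\partial h/\partial X^{\Im}$ and $\operatorname{grad}h(U)=U\,\mathrm{skew}(U^H\nabla h(U))$ with $\mathrm{skew}(P)=\frac12(P-P^H)$. $\Psi(\theta,\phi)=\begin{bmatrix}\cos\theta&-\sin\theta e^{\mathrm{i}\phi}\\ \sin\theta e^{-\mathrm{i}\phi}&\cos\theta\end{bmatrix}$ and $z_{\alpha,\beta}(\theta,\phi)=(\cos\alpha\theta,-\sin\alpha\theta\cos\beta\phi,-\sin\alpha\theta\sin\beta\phi)^T$. *)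

theory Defs
  imports "HOL-Analysis.Analysis"
begin

type_synonym cmat2 = "complex^2^2"

definition mH :: "cmat2 \<Rightarrow> cmat2" where
  "mH X = (\<chi> i j. cnj (X $ j $ i))"

definition unitary2 :: "cmat2 \<Rightarrow> bool" where
  "unitary2 U \<longleftrightarrow> mH U ** U = mat 1"

definition U2 :: "cmat2 set" where
  "U2 = {U. unitary2 U}"

definition diag_unitary2 :: "cmat2 \<Rightarrow> bool" where
  "diag_unitary2 D \<longleftrightarrow> unitary2 D \<and> (\<forall>i j. i \<noteq> j \<longrightarrow> D $ i $ j = 0)"

definition Eunit :: "2 \<Rightarrow> 2 \<Rightarrow> complex \<Rightarrow> cmat2" where
  "Eunit i j c = (\<chi> k l. if k = i \<and> l = j then c else 0)"

definition egrad :: "(cmat2 \<Rightarrow> real) \<Rightarrow> cmat2 \<Rightarrow> cmat2" where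
  "egrad h X = (\<chi> i j. Complex (deriv (\<lambda>t. h (X + t *\<^sub>R Eunit i j 1)) 0)
                              (deriv (\<lambda>t. h (X + t *\<^sub>R Eunit i j \<i>)) 0))"

definition skew :: "cmat2 \<Rightarrow> cmat2" where
  "skew P = (1/2::real) *\<^sub>R (P - mH P)"

definition rgrad :: "(cmat2 \<Rightarrow> real) \<Rightarrow> cmat2 \<Rightarrow> cmat2" where
  "rgrad h U = U ** skew (mH U ** egrad h U)"

definition Psi :: "real \<Rightarrow> real \<Rightarrow> cmat2" where
  "Psi \<theta> \<phi> = vector [vector [complex_of_real (cos \<theta>), - complex_of_real (sin \<theta>) * cis \<phi>],
                       vector [complex_of_real (sin \<theta>) * cis (- \<phi>), complex_of_real (cos \<theta>)]]"

definition zab :: "nat \<Rightarrow> nat \<Rightarrow> real \<Rightarrow> real \<Rightarrow> real^3" where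
  "zab \<alpha> \<beta> \<theta> \<phi> = vector [cos (real \<alpha> * \<theta>), - sin (real \<alpha> * \<theta>) * cos (real \<beta> * \<phi>),
                             - sin (real \<alpha> * \<theta>) * sin (real \<beta> * \<phi>)]"

end

theory Submission
  imports Defs
begin

(* Write m = M e1 and x = w1 = cos (alpha theta_s).  Invariance of h under right multiplication
   by diagonal unitaries kills the diagonal of grad h(I), and differentiating
   h (Psi t phi) = z^T M z + C at t = 0 for phi = 0 and phi = pi/2 expresses its off-diagonal part
   through m, giving |grad h(I)| <= 2 alpha sqrt (m2^2 + m3^2).  Since u1 = 0 or v1 = 0, the vector
   e1 lies in the span of w and one further eigenvector, with eigenvalue l <= lam1; hence
   h(Psi_s) - h(I) = lam1 - m1 = (lam1 - l)(1 - x^2) and m2^2 + m3^2 = x^2 (1 - x^2) (lam1 - l)^2.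
   Finally alpha theta_s <= pi/2 gives |Psi_s - I|^2 = 4 - 4 cos theta_s <= 4 (1 - x), and the
   claim reduces to x^2 (1 - x) / 2 <= 1 - x^2 on [0, 1]. *)

lemma cos_sin_combination_power2_le:
  fixes t a b :: real
  shows "(cos t * a + sin t * b)\<^sup>2 \<le> a\<^sup>2 + b\<^sup>2"
proof -
  have "(cos t * a + sin t * b)\<^sup>2 + (sin t * a - cos t * b)\<^sup>2 = ((sin t)\<^sup>2 + (cos t)\<^sup>2) * (a\<^sup>2 + b\<^sup>2)"
    by algebra
  then show ?thesis
    by (metis le_add_same_cancel1 zero_le_power2 sin_cos_squared_add mult_1)
qed

lemma scalar_gap_bound:
  fixes a x d g N :: real
  assumes "0 < a" "0 \<le> x" "x \<le> 1" "0 \<le> d" "0 \<le> N" "N\<^sup>2 \<le> 4 * (1 - x)"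
    and "g \<le> 2 * a * sqrt (x\<^sup>2 * (1 - x\<^sup>2) * d\<^sup>2)"
  shows "sqrt 2 / (8 * a) * g * N \<le> d * (1 - x\<^sup>2)"
proof -
  define q where "q = 1 - x\<^sup>2"
  have q: "q = (1 - x) * (1 + x)" "0 \<le> q"
    using assms(2,3) by (simp_all add: q_def power2_eq_square algebra_simps mult_le_one)
  have "sqrt 2 / (8 * a) * g * N \<le> sqrt 2 / (8 * a) * (2 * a * (x * d * sqrt q)) * N"
    using assms by (intro mult_right_mono mult_left_mono)
      (simp_all add: q_def real_sqrt_mult mult_ac)
  also have "\<dots> = sqrt 2 / 4 * x * d * sqrt q * N"
    using assms(1) by (simp add: field_simps)
  also have "\<dots> \<le> d * q"
  proof (rule power2_le_imp_le)
    have "(sqrt 2 / 4 * x * d * sqrt q * N)\<^sup>2 = (x * d)\<^sup>2 * q * N\<^sup>2 / 8"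
      unfolding power_mult_distrib power_divide real_sqrt_pow2[OF q(2)] by simp
    also have "\<dots> \<le> (x * d)\<^sup>2 * q * (4 * (1 - x)) / 8"
      using assms(6) q(2) by (intro divide_right_mono mult_left_mono) simp_all
    also have "\<dots> = d\<^sup>2 * q * (x\<^sup>2 * (1 - x) / 2)"
      by (simp add: power2_eq_square field_simps)
    also have "\<dots> \<le> d\<^sup>2 * q * q"
    proof (rule mult_left_mono)
      have "x\<^sup>2 \<le> 1"
        using assms(2,3) by (rule power_le_one)
      then have "x\<^sup>2 / 2 \<le> 1 + x"
        using assms(2) by linarith
      then show "x\<^sup>2 * (1 - x) / 2 \<le> q"
        unfolding q(1) using assms(3) by (metis diff_ge_0_iff_ge mult.commute mult_left_mono times_divide_eq_right)
    qed (use q(2) in simp)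
    also have "\<dots> = (d * q)\<^sup>2"
      by (simp add: power2_eq_square)
    finally show "(sqrt 2 / 4 * x * d * sqrt q * N)\<^sup>2 \<le> (d * q)\<^sup>2" .
  qed (use assms(4) q(2) in simp)
  finally show ?thesis
    unfolding q_def .
qed

section \<open>Two-by-two matrices and the curves Psi\<close>

lemma cmat2_eq_iff:
  "(A::cmat2) = B \<longleftrightarrow> A$1$1 = B$1$1 \<and> A$1$2 = B$1$2 \<and> A$2$1 = B$2$1 \<and> A$2$2 = B$2$2"
  by (auto simp: vec_eq_iff forall_2)

lemma norm_cmat2_power2:
  "(norm (A::cmat2))\<^sup>2 = (cmod (A$1$1))\<^sup>2 + (cmod (A$1$2))\<^sup>2 + (cmod (A$2$1))\<^sup>2 + (cmod (A$2$2))\<^sup>2"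
  by (simp add: norm_vec_def L2_set_def sum_2)

lemma mat_1_nth [simp]:
  "(mat 1 :: cmat2)$1$1 = 1" "(mat 1 :: cmat2)$1$2 = 0" "(mat 1 :: cmat2)$2$1 = 0" "(mat 1 :: cmat2)$2$2 = 1"
  by (simp_all add: mat_def)

lemma Eunit_nth [simp]: "Eunit i j c $ k $ l = (if k = i \<and> l = j then c else 0)"
  by (simp add: Eunit_def)

lemma Psi_nth [simp]:
  "Psi \<theta> \<phi> $1$1 = of_real (cos \<theta>)" "Psi \<theta> \<phi> $1$2 = - of_real (sin \<theta>) * cis \<phi>"
  "Psi \<theta> \<phi> $2$1 = of_real (sin \<theta>) * cis (- \<phi>)" "Psi \<theta> \<phi> $2$2 = of_real (cos \<theta>)"
  by (simp_all add: Psi_def)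

lemma mH_mat_1: "mH (mat 1) = mat 1"
  by (simp add: cmat2_eq_iff mH_def)

lemma mat_1_in_U2: "mat 1 \<in> U2"
  by (simp add: U2_def unitary2_def mH_mat_1)

lemma Psi_0: "Psi 0 \<phi> = mat 1"
  by (simp add: cmat2_eq_iff)

lemma Psi_eq_rotation: "Psi \<theta> \<phi> = cos \<theta> *\<^sub>R mat 1 + sin \<theta> *\<^sub>R Psi (pi/2) \<phi>"
  by (simp add: cmat2_eq_iff scaleR_conv_of_real[where 'a=complex])

lemma Psi_pi_half_0: "Psi (pi/2) 0 = Eunit 2 1 1 - Eunit 1 2 1"
  by (simp add: cmat2_eq_iff)

lemma Psi_pi_half_pi_half: "Psi (pi/2) (pi/2) = - Eunit 1 2 \<i> - Eunit 2 1 \<i>"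
  by (simp add: cmat2_eq_iff)

lemma norm_Psi_minus_1_power2: "(norm (Psi \<theta> \<phi> - mat 1))\<^sup>2 = 4 - 4 * cos \<theta>"
proof -
  have "cmod (of_real (cos \<theta>) - 1) = 1 - cos \<theta>"
    by (metis abs_of_nonneg cos_le_one diff_ge_0_iff_ge norm_minus_commute norm_of_real of_real_1 of_real_diff)
  then have "(norm (Psi \<theta> \<phi> - mat 1))\<^sup>2 = 2 * (1 - cos \<theta>)\<^sup>2 + 2 * (sin \<theta>)\<^sup>2"
    unfolding norm_cmat2_power2 by (simp add: norm_mult)
  also have "\<dots> = 4 - 4 * cos \<theta>"
    by (simp add: sin_squared_eq power2_diff algebra_simps)
  finally show ?thesis .
qed

lemma norm_Psi_minus_1_power2_le:
  assumes "0 < \<alpha>" "0 \<le> \<theta>" "\<theta> \<le> pi / (2 * real \<alpha>)"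
  shows "(norm (Psi \<theta> \<phi> - mat 1))\<^sup>2 \<le> 4 * (1 - cos (real \<alpha> * \<theta>))"
proof -
  have "\<theta> \<le> real \<alpha> * \<theta>"
    using mult_right_mono[of 1 "real \<alpha>" \<theta>] assms(1,2) by simp
  moreover have "real \<alpha> * \<theta> \<le> pi / 2"
    using assms(1,3) by (simp add: field_simps)
  ultimately have "cos (real \<alpha> * \<theta>) \<le> cos \<theta>"
    using assms(2) by (intro cos_monotone_0_pi_le) auto
  then show ?thesis
    by (simp add: norm_Psi_minus_1_power2)
qed

lemma diag_unitary2_phase:
  "diag_unitary2 (mat 1 + (cos t - 1) *\<^sub>R Eunit k k 1 + sin t *\<^sub>R Eunit k k \<i>)"
proof -
  define D :: cmat2 where "D = (\<chi> i j. if i = j then (if i = k then cis t else 1) else 0)"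
  have "mat 1 + (cos t - 1) *\<^sub>R Eunit k k 1 + sin t *\<^sub>R Eunit k k \<i> = D"
    unfolding cmat2_eq_iff D_def
    apply (simp only: vector_add_component vector_scaleR_component mat_1_nth Eunit_nth vec_lambda_beta)
    using exhaust_2[of k] by (elim disjE) (simp_all add: scaleR_conv_of_real cis.ctr Complex_eq)
  moreover have "mH D ** D = mat 1"
    unfolding cmat2_eq_iff mH_def D_def matrix_matrix_mult_def
    using exhaust_2[of k] by (elim disjE) (simp_all add: sum_2 cis_cnj cis_mult)
  ultimately show ?thesis
    by (simp add: diag_unitary2_def unitary2_def D_def)
qed

section \<open>The Riemannian gradient at the identity\<close>

lemma has_real_derivative_comp_curve:
  fixes h :: "'a::real_normed_vector \<Rightarrow> real"
  assumes hd: "(h has_derivative Dh) (at X)" and \<gamma>: "(\<gamma> has_vector_derivative v) (at t)"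
    and "\<gamma> t = X"
  shows "((\<lambda>s. h (\<gamma> s)) has_real_derivative Dh v) (at t)"
proof -
  have "((\<lambda>s. h (\<gamma> s)) has_derivative (\<lambda>s. Dh (s *\<^sub>R v))) (at t)"
    using has_derivative_compose[OF \<gamma>[unfolded has_vector_derivative_def]] hd \<open>\<gamma> t = X\<close> by simp
  moreover have "(\<lambda>s. Dh (s *\<^sub>R v)) = (\<lambda>s. Dh v * s)"
    using linear.scaleR[OF has_derivative_linear[OF hd]] by (auto simp: mult.commute)
  ultimately show ?thesis
    by (simp add: has_field_derivative_def)
qed

lemma deriv_along_line:
  fixes h :: "'a::real_normed_vector \<Rightarrow> real"
  assumes "(h has_derivative Dh) (at X)"
  shows "deriv (\<lambda>t. h (X + t *\<^sub>R E)) 0 = Dh E"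
proof -
  have "((\<lambda>t. X + t *\<^sub>R E) has_vector_derivative E) (at 0)"
    by (auto intro!: derivative_eq_intros)
  from has_real_derivative_comp_curve[OF assms this] show ?thesis
    by (intro DERIV_imp_deriv) simp
qed

lemma egrad_nth:
  assumes "(h has_derivative Dh) (at X)"
  shows "egrad h X $ i $ j = Complex (Dh (Eunit i j 1)) (Dh (Eunit i j \<i>))"
  by (simp add: egrad_def deriv_along_line[OF assms])

lemma cmod_half_diff_cnj_power2:
  "(cmod ((1/2::real) *\<^sub>R (a - cnj b)))\<^sup>2 = ((Re a - Re b)\<^sup>2 + (Im a + Im b)\<^sup>2) / 4"
  unfolding cmod_power2 by (simp add: power2_eq_square field_simps)

lemma norm_skew_power2:
  "(norm (skew G))\<^sup>2 = (Im (G$1$1))\<^sup>2 + (Im (G$2$2))\<^sup>2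
     + ((Re (G$1$2) - Re (G$2$1))\<^sup>2 + (Im (G$1$2) + Im (G$2$1))\<^sup>2) / 2"
  unfolding norm_cmat2_power2 skew_def mH_def
  by (simp only: vector_scaleR_component vector_minus_component vec_lambda_beta
      cmod_half_diff_cnj_power2) (simp add: power2_eq_square field_simps)

lemma norm_rgrad_mat_1_power2:
  fixes h :: "cmat2 \<Rightarrow> real"
  assumes hd: "(h has_derivative Dh) (at (mat 1))"
  shows "(norm (rgrad h (mat 1)))\<^sup>2 = (Dh (Eunit 1 1 \<i>))\<^sup>2 + (Dh (Eunit 2 2 \<i>))\<^sup>2
           + ((Dh (Psi (pi/2) 0))\<^sup>2 + (Dh (Psi (pi/2) (pi/2)))\<^sup>2) / 2"
proof -
  have lin: "linear Dh"
    using has_derivative_linear[OF hd] .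
  have "rgrad h (mat 1) = skew (egrad h (mat 1))"
    by (simp add: rgrad_def mH_mat_1)
  moreover have "Dh (Psi (pi/2) 0) = - (Dh (Eunit 1 2 1) - Dh (Eunit 2 1 1))"
    by (simp add: Psi_pi_half_0 linear_diff[OF lin])
  moreover have "Dh (Psi (pi/2) (pi/2)) = - (Dh (Eunit 1 2 \<i>) + Dh (Eunit 2 1 \<i>))"
    by (simp add: Psi_pi_half_pi_half linear_diff[OF lin] linear_neg[OF lin])
  ultimately show ?thesis
    by (simp add: norm_skew_power2 egrad_nth[OF hd] power2_commute add.commute)
qed

lemma derivative_diag_direction_eq_0:
  fixes h :: "cmat2 \<Rightarrow> real"
  assumes hd: "(h has_derivative Dh) (at (mat 1))"
    and diag_inv: "\<And>D. diag_unitary2 D \<Longrightarrow> h D = h (mat 1)"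
  shows "Dh (Eunit k k \<i>) = 0"
proof -
  define D where "D t = mat 1 + (cos t - 1) *\<^sub>R Eunit k k 1 + sin t *\<^sub>R Eunit k k \<i>" for t
  have "(D has_vector_derivative (- sin 0 *\<^sub>R Eunit k k 1 + cos 0 *\<^sub>R Eunit k k \<i>)) (at 0)"
    unfolding D_def by (auto intro!: derivative_eq_intros)
  then have "(D has_vector_derivative Eunit k k \<i>) (at 0)"
    by simp
  moreover have "D 0 = mat 1"
    by (simp add: D_def)
  ultimately have "((\<lambda>t. h (D t)) has_real_derivative Dh (Eunit k k \<i>)) (at 0)"
    by (rule has_real_derivative_comp_curve[OF hd])
  moreover have "(\<lambda>t. h (D t)) = (\<lambda>t. h (mat 1))"
    using diag_inv diag_unitary2_phase by (simp add: D_def)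
  then have "((\<lambda>t. h (D t)) has_real_derivative 0) (at 0)"
    by simp
  ultimately show ?thesis
    by (rule DERIV_unique)
qed

lemma has_real_derivative_quadratic_form:
  fixes M :: "real^'n^'n"
  assumes M: "transpose M = M" and \<gamma>: "(\<gamma> has_vector_derivative v) (at t)"
  shows "((\<lambda>s. \<gamma> s \<bullet> (M *v \<gamma> s)) has_real_derivative 2 * (v \<bullet> (M *v \<gamma> t))) (at t)"
proof -
  have "\<gamma> t \<bullet> (M *v v) = v \<bullet> (M *v \<gamma> t)"
    by (metis M dot_lmul_matrix inner_commute vector_transpose_matrix)
  moreover have "((\<lambda>s. \<gamma> s \<bullet> (M *v \<gamma> s)) has_derivative
      (\<lambda>s. \<gamma> t \<bullet> (M *v (s *\<^sub>R v)) + (s *\<^sub>R v) \<bullet> (M *v \<gamma> t))) (at t)"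
    using \<gamma> unfolding has_vector_derivative_def
    by (auto intro!: derivative_eq_intros bounded_linear.has_derivative[OF matrix_vector_mul_bounded_linear])
  ultimately have "((\<lambda>s. \<gamma> s \<bullet> (M *v \<gamma> s)) has_derivative (\<lambda>s. 2 * (v \<bullet> (M *v \<gamma> t)) * s)) (at t)"
    by (simp add: matrix_vector_mult_scaleR algebra_simps)
  then show ?thesis
    unfolding has_field_derivative_def .
qed

lemma zab_eq_cos_sin:
  "zab a b \<theta> \<phi> = cos (real a * \<theta>) *\<^sub>R axis 1 1
     + sin (real a * \<theta>) *\<^sub>R vector [0, - cos (real b * \<phi>), - sin (real b * \<phi>)]"
  by (simp add: zab_def vec_eq_iff forall_3 axis_def)

lemma zab_has_vector_derivative:
  "((\<lambda>\<theta>. zab a b \<theta> \<phi>) has_vector_derivative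
     real a *\<^sub>R vector [0, - cos (real b * \<phi>), - sin (real b * \<phi>)]) (at 0)"
proof -
  let ?y = "vector [0, - cos (real b * \<phi>), - sin (real b * \<phi>)] :: real^3"
  have "((\<lambda>\<theta>. cos (real a * \<theta>) *\<^sub>R axis 1 1 + sin (real a * \<theta>) *\<^sub>R ?y) has_vector_derivative
      (- sin (real a * 0) * real a) *\<^sub>R axis 1 1 + (cos (real a * 0) * real a) *\<^sub>R ?y) (at 0)"
    by (auto intro!: derivative_eq_intros)
  then show ?thesis
    by (simp add: zab_eq_cos_sin)
qed

lemma derivative_Psi_pi_half:
  fixes h :: "cmat2 \<Rightarrow> real" and M :: "real^3^3"
  assumes hd: "(h has_derivative Dh) (at (mat 1))"
    and hPsi: "\<And>\<theta> \<phi>. h (Psi \<theta> \<phi>) = zab \<alpha> \<beta> \<theta> \<phi> \<bullet> (M *v zab \<alpha> \<beta> \<theta> \<phi>) + C"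
    and M: "transpose M = M"
  shows "Dh (Psi (pi/2) \<phi>) = - 2 * real \<alpha> *
           (cos (real \<beta> * \<phi>) * (M *v axis 1 1)$2 + sin (real \<beta> * \<phi>) * (M *v axis 1 1)$3)"
proof (rule DERIV_unique)
  have "((\<lambda>\<theta>. cos \<theta> *\<^sub>R mat 1 + sin \<theta> *\<^sub>R Psi (pi/2) \<phi>) has_vector_derivative
      - sin 0 *\<^sub>R mat 1 + cos 0 *\<^sub>R Psi (pi/2) \<phi>) (at 0)"
    by (auto intro!: derivative_eq_intros)
  then have "((\<lambda>\<theta>. Psi \<theta> \<phi>) has_vector_derivative Psi (pi/2) \<phi>) (at 0)"
    by (simp flip: Psi_eq_rotation)
  from has_real_derivative_comp_curve[OF hd this Psi_0]
  show "((\<lambda>\<theta>. h (Psi \<theta> \<phi>)) has_real_derivative Dh (Psi (pi/2) \<phi>)) (at 0)" .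
  have "zab \<alpha> \<beta> 0 \<phi> = axis 1 1"
    by (simp add: zab_eq_cos_sin)
  then have "((\<lambda>\<theta>. zab \<alpha> \<beta> \<theta> \<phi> \<bullet> (M *v zab \<alpha> \<beta> \<theta> \<phi>)) has_real_derivative
      2 * ((real \<alpha> *\<^sub>R vector [0, - cos (real \<beta> * \<phi>), - sin (real \<beta> * \<phi>)])
           \<bullet> (M *v axis 1 1))) (at 0)"
    using has_real_derivative_quadratic_form[OF M zab_has_vector_derivative[of \<alpha> \<beta> \<phi>]]
    by (simp only:)
  from DERIV_add[OF this DERIV_const[of C]]
  have "((\<lambda>\<theta>. zab \<alpha> \<beta> \<theta> \<phi> \<bullet> (M *v zab \<alpha> \<beta> \<theta> \<phi>) + C) has_real_derivative - 2 * real \<alpha> *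
      (cos (real \<beta> * \<phi>) * (M *v axis 1 1)$2 + sin (real \<beta> * \<phi>) * (M *v axis 1 1)$3)) (at 0)"
    by (simp add: inner_vec_def sum_3 algebra_simps)
  then show "((\<lambda>\<theta>. h (Psi \<theta> \<phi>)) has_real_derivative - 2 * real \<alpha> *
      (cos (real \<beta> * \<phi>) * (M *v axis 1 1)$2 + sin (real \<beta> * \<phi>) * (M *v axis 1 1)$3)) (at 0)"
    by (simp only: hPsi)
qed

lemma norm_rgrad_mat_1_le:
  fixes h :: "cmat2 \<Rightarrow> real" and M :: "real^3^3"
  assumes hd: "(h has_derivative Dh) (at (mat 1))"
    and diag_inv: "\<And>D. diag_unitary2 D \<Longrightarrow> h D = h (mat 1)"
    and hPsi: "\<And>\<theta> \<phi>. h (Psi \<theta> \<phi>) = zab \<alpha> \<beta> \<theta> \<phi> \<bullet> (M *v zab \<alpha> \<beta> \<theta> \<phi>) + C"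
    and M: "transpose M = M"
  shows "norm (rgrad h (mat 1)) \<le> 2 * real \<alpha> * sqrt (((M *v axis 1 1)$2)\<^sup>2 + ((M *v axis 1 1)$3)\<^sup>2)"
proof (rule power2_le_imp_le)
  define a b t where "a = (M *v axis 1 1)$2" and "b = (M *v axis 1 1)$3" and "t = real \<beta> * (pi/2)"
  have "(norm (rgrad h (mat 1)))\<^sup>2 = ((2 * real \<alpha> * a)\<^sup>2 + (2 * real \<alpha> * (cos t * a + sin t * b))\<^sup>2) / 2"
    using norm_rgrad_mat_1_power2[OF hd] derivative_diag_direction_eq_0[OF hd diag_inv, of 1]
      derivative_diag_direction_eq_0[OF hd diag_inv, of 2] derivative_Psi_pi_half[OF hd hPsi M]
    by (simp add: a_def b_def t_def power2_eq_square)
  also have "\<dots> = 2 * (real \<alpha>)\<^sup>2 * (a\<^sup>2 + (cos t * a + sin t * b)\<^sup>2)"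
    by (simp add: power2_eq_square algebra_simps)
  also have "\<dots> \<le> 2 * (real \<alpha>)\<^sup>2 * (a\<^sup>2 + (a\<^sup>2 + b\<^sup>2))"
    by (intro mult_left_mono add_left_mono cos_sin_combination_power2_le) simp
  also have "\<dots> \<le> 2 * (real \<alpha>)\<^sup>2 * (2 * (a\<^sup>2 + b\<^sup>2))"
    by (intro mult_left_mono) simp_all
  also have "\<dots> = (2 * real \<alpha> * sqrt (a\<^sup>2 + b\<^sup>2))\<^sup>2"
    by (simp add: power_mult_distrib)
  finally show "(norm (rgrad h (mat 1)))\<^sup>2 \<le> (2 * real \<alpha> * sqrt (a\<^sup>2 + b\<^sup>2))\<^sup>2" .
  show "0 \<le> 2 * real \<alpha> * sqrt (((M *v axis 1 1)$2)\<^sup>2 + ((M *v axis 1 1)$3)\<^sup>2)"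
    by simp
qed

section \<open>The first column of M in an orthonormal eigenbasis\<close>

lemma orthonormal3_expansion:
  fixes w u v x :: "real^3"
  assumes "norm w = 1" "norm u = 1" "norm v = 1" "w \<bullet> u = 0" "w \<bullet> v = 0" "u \<bullet> v = 0"
  shows "x = (w \<bullet> x) *\<^sub>R w + (u \<bullet> x) *\<^sub>R u + (v \<bullet> x) *\<^sub>R v"
proof -
  define Q :: "real^3^3" where "Q = vector [w, u, v]"
  have "row i Q = Q $ i" for i
    by (simp add: row_def)
  then have "orthogonal_matrix Q"
    using assms unfolding orthogonal_matrix_orthonormal_rows orthogonal_def
    by (auto simp: Q_def forall_3 inner_commute)
  then have "x = transpose Q *v (Q *v x)"
    by (simp add: orthogonal_matrix_def matrix_vector_mul_assoc)
  then show ?thesis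
    by (simp add: Q_def vec_eq_iff forall_3 matrix_vector_mult_def transpose_def sum_3 inner_vec_def
        algebra_simps)
qed

lemma first_column_two_eigenvectors:
  fixes M :: "real^3^3" and w u :: "real^3"
  assumes "M *v w = lam *\<^sub>R w" "M *v u = l *\<^sub>R u"
    and "norm w = 1" "norm u = 1" "w \<bullet> u = 0"
    and e1: "axis 1 1 = (w$1) *\<^sub>R w + (u$1) *\<^sub>R u"
  shows "lam - (M *v axis 1 1)$1 = (lam - l) * (1 - (w$1)\<^sup>2)"
    and "((M *v axis 1 1)$2)\<^sup>2 + ((M *v axis 1 1)$3)\<^sup>2 = (w$1)\<^sup>2 * (1 - (w$1)\<^sup>2) * (lam - l)\<^sup>2"
proof -
  define m where "m = M *v axis 1 1"
  have ww: "w \<bullet> w = 1" and uu: "u \<bullet> u = 1" and uw: "u \<bullet> w = 0"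
    using assms(3-5) by (simp_all add: inner_commute flip: power2_norm_eq_inner)
  have q: "(u$1)\<^sup>2 = 1 - (w$1)\<^sup>2"
    using arg_cong[OF e1, of "\<lambda>y. y $ 1"] by (simp add: power2_eq_square)
  have m: "m = (w$1 * lam) *\<^sub>R w + (u$1 * l) *\<^sub>R u"
    unfolding m_def e1 by (simp add: matrix_vector_right_distrib matrix_vector_mult_scaleR assms(1,2))
  have m1: "m$1 = lam * (w$1)\<^sup>2 + l * (u$1)\<^sup>2"
    unfolding m by (simp add: power2_eq_square)
  have "(m$1)\<^sup>2 + (m$2)\<^sup>2 + (m$3)\<^sup>2 = m \<bullet> m"
    by (simp add: inner_vec_def sum_3 power2_eq_square)
  also have "\<dots> = lam\<^sup>2 * (w$1)\<^sup>2 + l\<^sup>2 * (u$1)\<^sup>2"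
    unfolding m by (simp add: inner_add_left inner_add_right ww uu uw assms(5) power2_eq_square)
  finally have "(m$2)\<^sup>2 + (m$3)\<^sup>2 = lam\<^sup>2 * (w$1)\<^sup>2 + l\<^sup>2 * (u$1)\<^sup>2 - (m$1)\<^sup>2"
    by simp
  then show "(m$2)\<^sup>2 + (m$3)\<^sup>2 = (w$1)\<^sup>2 * (1 - (w$1)\<^sup>2) * (lam - l)\<^sup>2"
    unfolding m1 q by (simp add: power2_eq_square algebra_simps)
  show "lam - m$1 = (lam - l) * (1 - (w$1)\<^sup>2)"
    unfolding m1 q by (simp add: algebra_simps)
qed

lemma first_column_of_eigenbasis:
  fixes M :: "real^3^3" and w u v :: "real^3"
  assumes "lam1 \<ge> lam2" "lam2 \<ge> lam3"
    and "M *v w = lam1 *\<^sub>R w" "M *v u = lam2 *\<^sub>R u" "M *v v = lam3 *\<^sub>R v"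
    and "norm w = 1" "norm u = 1" "norm v = 1" "w \<bullet> u = 0" "w \<bullet> v = 0" "u \<bullet> v = 0"
    and "u$1 = 0 \<or> v$1 = 0"
  obtains l where "l \<le> lam1"
    "lam1 - (M *v axis 1 1)$1 = (lam1 - l) * (1 - (w$1)\<^sup>2)"
    "((M *v axis 1 1)$2)\<^sup>2 + ((M *v axis 1 1)$3)\<^sup>2 = (w$1)\<^sup>2 * (1 - (w$1)\<^sup>2) * (lam1 - l)\<^sup>2"
proof -
  have e1: "axis 1 1 = (w$1) *\<^sub>R w + (u$1) *\<^sub>R u + (v$1) *\<^sub>R v"
    using orthonormal3_expansion[OF assms(6-11), of "axis 1 1"] by (simp add: inner_axis)
  show thesis
  proof (cases "v$1 = 0")
    case True
    with e1 have "axis 1 1 = (w$1) *\<^sub>R w + (u$1) *\<^sub>R u"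
      by simp
    from first_column_two_eigenvectors[OF assms(3,4,6,7,9) this] assms(1) show thesis
      by (intro that[of lam2]) simp_all
  next
    case False
    with e1 assms(12) have "axis 1 1 = (w$1) *\<^sub>R w + (v$1) *\<^sub>R v"
      by simp
    from first_column_two_eigenvectors[OF assms(3,5,6,8,10) this] assms(1,2) show thesis
      by (intro that[of lam3]) simp_all
  qed
qed

theorem lemma4p9:
  fixes \<alpha> \<beta> :: nat and h :: "cmat2 \<Rightarrow> real" and M :: "real^3^3" and C :: real
    and lam1 lam2 lam3 :: real and w u v :: "real^3" and \<theta>s \<phi>s :: real
  assumes "\<alpha> > 0" and "\<beta> > 0"
    and "\<exists>S. open S \<and> U2 \<subseteq> S \<and> (\<forall>X\<in>S. h differentiable (at X))"
    and "\<And>P D. P \<in> U2 \<Longrightarrow> diag_unitary2 D \<Longrightarrow> h (P ** D) = h P"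
    and "\<And>\<theta> \<phi>. h (Psi \<theta> \<phi>) = zab \<alpha> \<beta> \<theta> \<phi> \<bullet> (M *v zab \<alpha> \<beta> \<theta> \<phi>) + C"
    and "transpose M = M"
    and "lam1 \<ge> lam2" and "lam2 \<ge> lam3"
    and "M *v w = lam1 *\<^sub>R w" and "M *v u = lam2 *\<^sub>R u" and "M *v v = lam3 *\<^sub>R v"
    and "norm w = 1" and "norm u = 1" and "norm v = 1"
    and "w \<bullet> u = 0" and "w \<bullet> v = 0" and "u \<bullet> v = 0"
    and "w $ 1 \<ge> 0"
    and "u $ 1 = 0 \<or> v $ 1 = 0"
    and "0 \<le> \<theta>s" and "\<theta>s \<le> pi / (2 * real \<alpha>)"
    and "zab \<alpha> \<beta> \<theta>s \<phi>s = w"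
  shows "h (Psi \<theta>s \<phi>s) - h (mat 1)
           \<ge> sqrt 2 / (8 * real \<alpha>) * norm (rgrad h (mat 1)) * norm (Psi \<theta>s \<phi>s - mat 1)"
proof -
  obtain Dh where hd: "(h has_derivative Dh) (at (mat 1))"
    using assms(3) mat_1_in_U2 unfolding differentiable_def by blast
  have diag_inv: "diag_unitary2 D \<Longrightarrow> h D = h (mat 1)" for D
    using assms(4)[OF mat_1_in_U2] by simp
  define m where "m = M *v axis 1 1"
  obtain l where l: "l \<le> lam1" "lam1 - m$1 = (lam1 - l) * (1 - (w$1)\<^sup>2)"
    "(m$2)\<^sup>2 + (m$3)\<^sup>2 = (w$1)\<^sup>2 * (1 - (w$1)\<^sup>2) * (lam1 - l)\<^sup>2"
    unfolding m_def using first_column_of_eigenbasis[OF assms(7-17,19)] .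
  have grad: "norm (rgrad h (mat 1)) \<le> 2 * real \<alpha> * sqrt ((w$1)\<^sup>2 * (1 - (w$1)\<^sup>2) * (lam1 - l)\<^sup>2)"
    using norm_rgrad_mat_1_le[OF hd diag_inv assms(5,6)] l(3) by (simp add: m_def)
  have "w$1 = cos (real \<alpha> * \<theta>s)"
    using assms(22) by (auto simp: zab_def)
  then have dist: "(norm (Psi \<theta>s \<phi>s - mat 1))\<^sup>2 \<le> 4 * (1 - w$1)"
    using norm_Psi_minus_1_power2_le[OF assms(1,20,21)] by simp
  have "w$1 \<le> 1"
    using component_le_norm_cart[of w 1] assms(12) by simp
  with assms(1,18) l(1) dist grad
  have "sqrt 2 / (8 * real \<alpha>) * norm (rgrad h (mat 1)) * norm (Psi \<theta>s \<phi>s - mat 1)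
          \<le> (lam1 - l) * (1 - (w$1)\<^sup>2)"
    by (intro scalar_gap_bound) simp_all
  moreover have "h (Psi \<theta>s \<phi>s) = lam1 + C"
    using assms(5)[of \<theta>s \<phi>s] assms(9,12) by (simp add: assms(22) flip: power2_norm_eq_inner)
  moreover have "h (mat 1) = m$1 + C"
    using assms(5)[of 0 0] by (simp add: Psi_0 zab_eq_cos_sin m_def inner_axis')
  ultimately show ?thesis
    using l(2) by simp
qed

end
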